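(* Let $d \geq 2$ and $n$ be positive integers. Let $\mathcal{S}_{n,d}$ be the family of all maximal spherical sets of $[n]^d$. Then the VC-dimension of the set system $([n]^d, \mathcal{S}_{n,d})$ is at most $d+1$.
   Context: $[n]=\{1,\dots,n\}$. A sphere is a $(d-1)$-dimensional sphere in $\mathbb{R}^d$. A subset $A \subset [n]^d$ is a maximal spherical set of $[n]^d$ if all points of $A$ lie on a single sphere $S$ in $\mathbb{R}^d$ and no point of $[n]^d$ can be added to $A$ while keeping all points on $S$ (i.e. $A = S \cap [n]^d$ for some sphere $S$). For a set system $\mathcal{F}$ on ground set $P$, a set $T \subset P$ is shattered if for every $B \subset T$ there is $F \in \mathcal{F}$ with $F \cap T = B$; the VC-dimension is the largest size of a shattered subset of $P$. *)

theory Defs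
  imports "HOL-Analysis.Analysis"
begin

definition grid :: "nat \<Rightarrow> (real ^ 'd) set" where
  "grid n = {x. \<forall>i. \<exists>k::nat. 1 \<le> k \<and> k \<le> n \<and> x $ i = real k}"

definition is_sphere :: "(real ^ 'd) set \<Rightarrow> bool" where
  "is_sphere S \<longleftrightarrow> (\<exists>c r. r > 0 \<and> S = sphere c r)"

definition maximal_spherical_sets :: "nat \<Rightarrow> (real ^ 'd) set set" where
  "maximal_spherical_sets n = {A. \<exists>S. is_sphere S \<and> A = S \<inter> grid n}"

definition shatters :: "'a set set \<Rightarrow> 'a set \<Rightarrow> bool" where
  "shatters F T \<longleftrightarrow> (\<forall>B \<subseteq> T. \<exists>X \<in> F. X \<inter> T = B)"

definition vc_dim_le :: "'a set \<Rightarrow> 'a set set \<Rightarrow> nat \<Rightarrow> bool" where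
  "vc_dim_le P F k \<longleftrightarrow> (\<forall>T \<subseteq> P. shatters F T \<longrightarrow> finite T \<and> card T \<le> k)"

end

theory Submission
  imports Defs
begin

text \<open>The difference of the squared distances to two centres is an affine function of the
point, so the common points of two spheres lie in an affine set. If the points of a set T on a
common sphere are affinely dependent, some q \<in> T lies in the affine hull of T - {q}; every
sphere through T - {q} then also passes through q, so the trace T - {q} is not cut out by any
sphere and T is not shattered. Shattered sets are therefore affinely independent, hence have at
most d + 1 points.\<close>

lemma dist_power2_diff:
  fixes a b x :: "'a::real_inner"
  shows "(dist a x)\<^sup>2 - (dist b x)\<^sup>2 = 2 * inner (b - a) x + (inner a a - inner b b)"
  unfolding dist_norm power2_norm_eq_inner
  by (simp add: inner_diff_left inner_diff_right inner_commute algebra_simps)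

lemma affine_hull_sphere_inter_sphere:
  fixes a b :: "'a::real_inner"
  shows "affine hull (sphere a r \<inter> sphere b s) \<inter> sphere b s \<subseteq> sphere a r"
proof
  fix q assume q: "q \<in> affine hull (sphere a r \<inter> sphere b s) \<inter> sphere b s"
  define H where "H = {x. 2 * inner (b - a) x = r\<^sup>2 - s\<^sup>2 - (inner a a - inner b b)}"
  have "sphere a r \<inter> sphere b s \<subseteq> H"
    using dist_power2_diff[of a _ b] by (auto simp: H_def)
  moreover have "affine H"
    using affine_hyperplane[of "2 *\<^sub>R (b - a)"] by (simp add: H_def)
  ultimately have "q \<in> H"
    using q hull_minimal[of _ H affine] by blast
  with q have dist_q: "(dist a q)\<^sup>2 = r\<^sup>2"
    using dist_power2_diff[of a q b] by (simp add: H_def)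
  have "r \<ge> 0"
  proof (rule ccontr)
    assume "\<not> r \<ge> 0"
    then have "sphere a r = {}" by simp
    with q show False by simp
  qed
  with dist_q show "q \<in> sphere a r"
    by (simp add: power2_eq_iff_nonneg)
qed

lemma shatters_sphere_traces_imp_affine_independent:
  fixes T P :: "'a::real_inner set"
  assumes shatters: "shatters F T"
    and traces: "\<And>X. X \<in> F \<Longrightarrow> \<exists>c r. X = sphere c r \<inter> P"
    and "T \<subseteq> P"
  shows "\<not> affine_dependent T"
proof
  assume "affine_dependent T"
  then obtain q where "q \<in> T" and q_hull: "q \<in> affine hull (T - {q})"
    unfolding affine_dependent_def by blast
  obtain X0 where "X0 \<in> F" "X0 \<inter> T = T"
    using shatters unfolding shatters_def by blast
  then obtain b s where T_sphere: "T \<subseteq> sphere b s"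
    using traces by blast
  obtain X where "X \<in> F" and X_trace: "X \<inter> T = T - {q}"
    using shatters unfolding shatters_def by (meson Diff_subset)
  then obtain a r where X: "X = sphere a r \<inter> P"
    using traces by blast
  have "T - {q} \<subseteq> sphere a r \<inter> sphere b s"
    using X X_trace T_sphere by blast
  then have "q \<in> affine hull (sphere a r \<inter> sphere b s) \<inter> sphere b s"
    using q_hull hull_mono \<open>q \<in> T\<close> T_sphere by blast
  then have "q \<in> X"
    using affine_hull_sphere_inter_sphere X \<open>q \<in> T\<close> \<open>T \<subseteq> P\<close> by blast
  with X_trace \<open>q \<in> T\<close> show False by blast
qed

lemma maximal_spherical_set_trace:
  "X \<in> maximal_spherical_sets n \<Longrightarrow> \<exists>c r. X = sphere c r \<inter> grid n"
  unfolding maximal_spherical_sets_def is_sphere_def by blast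

theorem lemma2p2:
  fixes n :: nat
  assumes "CARD('d::finite) \<ge> 2" and "n \<ge> 1"
  shows "vc_dim_le (grid n :: (real ^ 'd) set) (maximal_spherical_sets n) (CARD('d) + 1)"
  unfolding vc_dim_le_def
proof (intro allI impI)
  fix T :: "(real ^ 'd) set"
  assume "T \<subseteq> grid n" and "shatters (maximal_spherical_sets n) T"
  then have independent: "\<not> affine_dependent T"
    using shatters_sphere_traces_imp_affine_independent maximal_spherical_set_trace by blast
  then have "finite T"
    by (rule aff_independent_finite)
  moreover have "card T \<le> CARD('d) + 1"
    using affine_dependent_biggerset[OF \<open>finite T\<close>] independent by fastforce
  ultimately show "finite T \<and> card T \<le> CARD('d) + 1" ..
qed

end
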